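(* Let $q,q',n$ be integers with $q'\ge 2q>3$ and $n>1$. Let $S$ be an $\mathcal{OS}_q(n)$ of period $m$ with ring sequence $[s_0,\ldots,s_{m-1}]$, and for $x\in\mathbb{Z}_q$ let $x'$ denote the class in $\mathbb{Z}_{q'}$ of the integer in $\{0,\ldots,q-1\}$ representing $x$. Let $T$ be the sequence over $\mathbb{Z}_{q'}$ with ring sequence $[t_0,\ldots,t_{m-1}]$, where $t_i=(-1)^{i+m-1}s_i'$ if $s_i'\neq 0$ and $t_i=(-1)^{i+m-1}q$ (as an element of $\mathbb{Z}_{q'}$) if $s_i'=0$. Then $T$ is an $\mathcal{SOS}_{q'}(n)$.
   Context: For a periodic sequence $S=(s_i)$ over $\mathbb{Z}_q$ write $\mathbf{s}_n(i)=(s_i,\ldots,s_{i+n-1})$; $\mathbf{u}^R$ denotes the reverse of a tuple and $-\mathbf{u}$ its termwise negative. An $n$-window sequence of period $m$ satisfies $\mathbf{s}_n(i)=\mathbf{s}_n(j)\Rightarrow i\equiv j\pmod m$. An $\mathcal{OS}_q(n)$ is an $n$-window sequence with $\mathbf{s}_n(i)\neq\mathbf{s}_n(j)^R$ for all $i,j$; an $\mathcal{SOS}_q(n)$ is an $\mathcal{OS}_q(n)$ with also $\mathbf{s}_n(i)\neq-\mathbf{s}_n(j)^R$ for all $i,j$. The ring sequence of a sequence of period $m$ is one period, i.e. $s_{i+tm}=s_i$. *)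

theory Defs
  imports Main
begin

text \<open>A sequence over Z_q is a function nat => int with values in {0..<q}
  (canonical representatives of residue classes).\<close>

definition over_Zq :: "int \<Rightarrow> (nat \<Rightarrow> int) \<Rightarrow> bool" where
  "over_Zq q s \<longleftrightarrow> (\<forall>i. 0 \<le> s i \<and> s i < q)"

definition window :: "(nat \<Rightarrow> int) \<Rightarrow> nat \<Rightarrow> nat \<Rightarrow> int list" where
  "window s n i = map s [i..<i+n]"

definition neg_tuple :: "int \<Rightarrow> int list \<Rightarrow> int list" where
  "neg_tuple q u = map (\<lambda>x. (- x) mod q) u"

definition periodic_seq :: "(nat \<Rightarrow> int) \<Rightarrow> nat \<Rightarrow> bool" where
  "periodic_seq s m \<longleftrightarrow> m > 0 \<and> (\<forall>i. s (i + m) = s i)"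

definition window_seq :: "int \<Rightarrow> nat \<Rightarrow> nat \<Rightarrow> (nat \<Rightarrow> int) \<Rightarrow> bool" where
  "window_seq q n m s \<longleftrightarrow> over_Zq q s \<and> periodic_seq s m \<and>
     (\<forall>i j. window s n i = window s n j \<longrightarrow> i mod m = j mod m)"

definition OS :: "int \<Rightarrow> nat \<Rightarrow> nat \<Rightarrow> (nat \<Rightarrow> int) \<Rightarrow> bool" where
  "OS q n m s \<longleftrightarrow> window_seq q n m s \<and> (\<forall>i j. window s n i \<noteq> rev (window s n j))"

definition SOS :: "int \<Rightarrow> nat \<Rightarrow> nat \<Rightarrow> (nat \<Rightarrow> int) \<Rightarrow> bool" where
  "SOS q n m s \<longleftrightarrow> OS q n m s \<and> (\<forall>i j. window s n i \<noteq> neg_tuple q (rev (window s n j)))"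

end

theory Submission
  imports Defs
begin

text \<open>
  Let \<open>fold_sign q q'\<close> send \<open>x \<in> \<int>\<^sub>q\<^sub>'\<close> to the class in \<open>\<int>\<^sub>q\<close> of \<open>x\<close> if \<open>x \<le> q\<close> and of \<open>q' - x\<close>
  otherwise. Since \<open>q' \<ge> 2q\<close> and every \<open>t\<^sub>i\<close> is \<open>\<plusminus>v\<close> for some \<open>v \<in> {1..q}\<close> with
  \<open>v \<equiv> s\<^sub>i (mod q)\<close>, this map sends both \<open>t\<^sub>i\<close> and \<open>-t\<^sub>i\<close> to \<open>s\<^sub>i\<close>. Applied termwise, a
  coincidence of two windows of \<open>T\<close>, of a window with a reversed window, or of a window with
  a negated reversed window becomes a coincidence of two windows of \<open>S\<close> or of a window of
  \<open>S\<close> with a reversed one. Hence \<open>T\<close> inherits the window and orientation properties of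
  \<open>S\<close>, and the negation property comes for free.
\<close>

definition fold_sign :: "int \<Rightarrow> int \<Rightarrow> int \<Rightarrow> int" where
  "fold_sign q q' x = (if x \<le> q then x else q' - x) mod q"

lemma fold_sign_mod:
  fixes q q' x :: int
  assumes "q' \<ge> 2 * q" and "1 \<le> \<bar>x\<bar>" and "\<bar>x\<bar> \<le> q"
  shows "fold_sign q q' (x mod q') = \<bar>x\<bar> mod q"
proof (cases "x > 0")
  case True
  then have "x mod q' = x"
    using assms by simp
  then show ?thesis
    using True assms(3) by (simp add: fold_sign_def)
next
  case False
  then have x_mod: "x mod q' = q' + x"
    using assms mod_pos_pos_trivial[of "q' + x" q'] by (simp add: mod_add_self1)
  show ?thesis
  proof (cases "q' + x \<le> q")
    case True
    then have "q' + x = q" and "\<bar>x\<bar> = q"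
      using False assms by linarith+
    then show ?thesis
      using x_mod by (simp add: fold_sign_def)
  next
    case False
    then show ?thesis
      using x_mod \<open>\<not> x > 0\<close> by (simp add: fold_sign_def)
  qed
qed

lemma fold_sign_signed_lift:
  fixes q q' x :: int and e :: nat
  defines "y \<equiv> (-1) ^ e * (if x mod q' \<noteq> 0 then x mod q' else q)"
  assumes "q' \<ge> 2 * q" and "0 \<le> x" and "x < q"
  shows "fold_sign q q' (y mod q') = x"
    and "fold_sign q q' ((- (y mod q')) mod q') = x"
proof -
  have "\<bar>y\<bar> = (if x \<noteq> 0 then x else q)"
    using assms by (simp add: y_def abs_mult)
  then have "1 \<le> \<bar>y\<bar>" "\<bar>y\<bar> \<le> q" "\<bar>y\<bar> mod q = x"
    using assms by auto
  then show "fold_sign q q' (y mod q') = x"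
    and "fold_sign q q' ((- (y mod q')) mod q') = x"
    using fold_sign_mod[OF assms(2), of y] fold_sign_mod[OF assms(2), of "- y"]
    by (simp_all add: mod_minus_eq)
qed

lemma periodic_seq_add_mult:
  assumes "periodic_seq t m"
  shows "t (i + c * m) = t i"
proof (induction c)
  case (Suc c)
  have "t (i + Suc c * m) = t ((i + c * m) + m)"
    by (simp add: algebra_simps)
  then show ?case
    using Suc assms by (simp add: periodic_seq_def)
qed simp

lemma periodic_seq_mod:
  assumes "periodic_seq t m"
  shows "t k = t (k mod m)"
  using periodic_seq_add_mult[OF assms, of "k mod m" "k div m"] by simp

lemma window_comp: "window (f \<circ> t) n i = map f (window t n i)"
  by (simp add: window_def)

lemma window_seq_of_decoding:
  assumes "window_seq q n m (f \<circ> t)" and "over_Zq q' t" and "periodic_seq t m"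
  shows "window_seq q' n m t"
  unfolding window_seq_def
proof (intro conjI allI impI)
  fix i j
  assume "window t n i = window t n j"
  then have "window (f \<circ> t) n i = window (f \<circ> t) n j"
    by (simp only: window_comp)
  then show "i mod m = j mod m"
    using assms(1) unfolding window_seq_def by blast
qed (use assms in simp_all)

lemma OS_of_decoding:
  assumes "OS q n m (f \<circ> t)" and "over_Zq q' t" and "periodic_seq t m"
  shows "OS q' n m t"
  unfolding OS_def
proof (intro conjI allI notI)
  show "window_seq q' n m t"
    using assms window_seq_of_decoding by (auto simp: OS_def)
  fix i j
  assume "window t n i = rev (window t n j)"
  then have "window (f \<circ> t) n i = rev (window (f \<circ> t) n j)"
    by (simp add: window_comp rev_map)
  then show False
    using assms(1) unfolding OS_def by blast
qed

lemma SOS_of_decoding: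
  assumes "OS q n m (f \<circ> t)" and "over_Zq q' t" and "periodic_seq t m"
    and "\<And>k. f ((- t k) mod q') = f (t k)"
  shows "SOS q' n m t"
  unfolding SOS_def
proof (intro conjI allI notI)
  show "OS q' n m t"
    using assms(1-3) by (rule OS_of_decoding)
  fix i j
  assume "window t n i = neg_tuple q' (rev (window t n j))"
  then have "window (f \<circ> t) n i = map f (neg_tuple q' (rev (window t n j)))"
    by (simp add: window_comp)
  also have "\<dots> = rev (window (f \<circ> t) n j)"
    using assms(4) by (simp add: window_def neg_tuple_def rev_map)
  finally have "window (f \<circ> t) n i = rev (window (f \<circ> t) n j)" .
  then show False
    using assms(1) unfolding OS_def by blast
qed

theorem lemma3p12:
  fixes q q' :: int and n m :: nat and s t :: "nat \<Rightarrow> int"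
  assumes "q' \<ge> 2 * q" and "2 * q > 3" and "n > 1"
    and "OS q n m s"
    and "periodic_seq t m"
    and "\<forall>i<m. t i = (let sp = s i mod q' in
            ((-1) ^ (i + m - 1) * (if sp \<noteq> 0 then sp else q)) mod q')"
  shows "SOS q' n m t"
proof -
  have s_range: "0 \<le> s k \<and> s k < q" and s_periodic: "periodic_seq s m" for k
    using assms(4) by (auto simp: OS_def window_seq_def over_Zq_def)
  then have m_pos: "m > 0" by (simp add: periodic_seq_def)
  have t_mod: "t k = ((-1) ^ (k mod m + m - 1) * (if s (k mod m) mod q' \<noteq> 0
      then s (k mod m) mod q' else q)) mod q'" for k
    using assms(6) m_pos periodic_seq_mod[OF assms(5), of k] by (simp add: Let_def)
  have "over_Zq q' t"
    using assms(1,2) by (simp add: over_Zq_def t_mod)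
  moreover have "fold_sign q q' (t k) = s k" and "fold_sign q q' ((- t k) mod q') = s k" for k
    using fold_sign_signed_lift[OF assms(1) s_range[THEN conjunct1] s_range[THEN conjunct2]]
      periodic_seq_mod[OF s_periodic, of k]
    by (simp_all add: t_mod)
  ultimately show ?thesis
    using SOS_of_decoding[of q n m "fold_sign q q'" t q'] assms(4,5)
    by (simp add: comp_def)
qed

end
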